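(* Let $p\ge 1$, $N\ge 1$, let $x_1,\dots,x_N\in\mathbb{R}^p$ be arbitrary, and let $w_1,\dots,w_N>0$ be fixed weights. Let $f:\mathbb{R}^p\to[0,1]$ be PDD. Define the blurring mean-shift iteration by $x_i^{(0)}=x_i$ and $$x_i^{(t+1)}=\frac{\sum_{j=1}^N f(x_i^{(t)}-x_j^{(t)})\,w_j\,x_j^{(t)}}{\sum_{j=1}^N f(x_i^{(t)}-x_j^{(t)})\,w_j},\qquad i=1,\dots,N,\ t\ge 0.$$ Then there exist points $x_1^*,\dots,x_N^*\in\mathbb{R}^p$ such that $\lim_{t\to\infty}x_i^{(t)}=x_i^*$ for every $i=1,\dots,N$.
   Context: A function $f:\mathbb{R}^p\to[0,1]$ is called PDD (positive and decreasing with respect to distance) if: (i) $0\le f(u)\le 1$ for all $u$, and $f(u)=1$ if and only if $u=0$; (ii) $f(u)$ depends only on $\|u\|$, i.e. $f(u)=\varphi(\|u\|)$ for some function $\varphi:[0,\infty)\to[0,1]$; (iii) $\varphi$ is decreasing (non-increasing) in $\|u\|$. The denominators in the iteration are positive since $f(0)=1$ and $w_i>0$. *)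

theory Defs
  imports "HOL-Analysis.Analysis"
begin

text \<open>PDD: positive and decreasing with respect to distance.\<close>
definition PDD :: "(real^'p \<Rightarrow> real) \<Rightarrow> bool" where
  "PDD f \<longleftrightarrow>
     (\<forall>u. 0 \<le> f u \<and> f u \<le> 1) \<and>
     (\<forall>u. f u = 1 \<longleftrightarrow> u = 0) \<and>
     (\<exists>\<phi> :: real \<Rightarrow> real.
        (\<forall>u. f u = \<phi> (norm u)) \<and>
        (\<forall>a b. 0 \<le> a \<longrightarrow> a \<le> b \<longrightarrow> \<phi> b \<le> \<phi> a))"

primrec bms :: "(real^'p \<Rightarrow> real) \<Rightarrow> (nat \<Rightarrow> real) \<Rightarrow> nat \<Rightarrow> (nat \<Rightarrow> real^'p)
                 \<Rightarrow> nat \<Rightarrow> nat \<Rightarrow> real^'p" where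
  "bms f w N x 0 = x"
| "bms f w N x (Suc t) =
     (\<lambda>i. inverse (\<Sum>j<N. f (bms f w N x t i - bms f w N x t j) * w j) *\<^sub>R
          (\<Sum>j<N. (f (bms f w N x t i - bms f w N x t j) * w j) *\<^sub>R bms f w N x t j))"

end

theory Submission
  imports Defs
begin

text \<open>If \<open>f\<close> vanishes off the origin, every point only sees itself and the iteration is constant.
  Otherwise \<open>f \<ge> \<kappa> > 0\<close> on a ball of radius \<open>r > 0\<close>, and the proof runs as follows.
  (1) The energy \<open>\<Sum>\<^sub>i\<^sub>j w\<^sub>i w\<^sub>j h(\<bar>x\<^sub>i - x\<^sub>j\<bar>\<^sup>2)\<close>, with \<open>h\<close> a concave primitive of \<open>\<phi>(\<surd>\<cdot>)\<close>,
  decreases by at least \<open>4 \<Sum>\<^sub>i w\<^sub>i\<^sup>2 \<bar>displacement\<^sub>i\<bar>\<^sup>2\<close>, so displacements tend to zero.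
  (2) Then \<open>F\<^sub>i\<^sub>j \<bar>x\<^sub>i - x\<^sub>j\<bar>\<^sup>2 \<rightarrow> 0\<close>, and each pair either merges (\<open>close\<close>) or stops interacting;
  all interactions and normalisers converge.  (3) Eventually, cluster diameters contract
  geometrically up to the cross-cluster interaction, while a weighted second moment decreases
  by a multiple of that interaction up to a vanishing error.  (4) These coupled recursions make
  diameters and interactions summable, hence displacements summable, hence the iterates converge.\<close>

lemma decreasing_integrable_on:
  fixes g :: "real \<Rightarrow> real"
  assumes dec: "\<And>a b. 0 \<le> a \<Longrightarrow> a \<le> b \<Longrightarrow> g b \<le> g a" and "0 \<le> c"
  shows "g integrable_on {c..d}"
proof -
  have "mono_on {c..d} (\<lambda>x. - g x)"
    using dec assms(2) by (auto simp: mono_on_def)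
  then have "(\<lambda>x. - g x) integrable_on {c..d}" by (rule integrable_on_mono_on)
  then show ?thesis using integrable_neg by fastforce
qed

text \<open>The primitive of a decreasing function is concave: it lies below each of its
  tangent lines.  This is the inequality behind the energy decrease of the iteration.\<close>
lemma primitive_of_decreasing_below_tangent:
  fixes g :: "real \<Rightarrow> real"
  assumes dec: "\<And>a b. 0 \<le> a \<Longrightarrow> a \<le> b \<Longrightarrow> g b \<le> g a" and s: "0 \<le> s" and s': "0 \<le> s'"
  shows "integral {0..s'} g \<le> integral {0..s} g + g s * (s' - s)"
proof (cases "s \<le> s'")
  case True
  have "integral {0..s} g + integral {s..s'} g = integral {0..s'} g"
    using True s by (intro Henstock_Kurzweil_Integration.integral_combine decreasing_integrable_on[OF dec]) auto
  moreover have "integral {s..s'} g \<le> integral {s..s'} (\<lambda>_. g s)"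
    using s by (intro integral_le decreasing_integrable_on[OF dec]) (auto intro: dec)
  ultimately show ?thesis using True by (simp add: algebra_simps)
next
  case False
  have "integral {0..s'} g + integral {s'..s} g = integral {0..s} g"
    using False s' decreasing_integrable_on[OF dec, where c=0 and d=s]
    by (intro Henstock_Kurzweil_Integration.integral_combine) auto
  moreover have "integral {s'..s} (\<lambda>_. g s) \<le> integral {s'..s} g"
  proof (rule integral_le)
    show "g integrable_on {s'..s}" by (rule decreasing_integrable_on[OF dec s'])
  qed (use s s' False in \<open>auto intro: dec\<close>)
  ultimately show ?thesis using False by (simp add: algebra_simps)
qed

lemma weighted_polarization:
  fixes B :: "nat \<Rightarrow> nat \<Rightarrow> real" and y z :: "nat \<Rightarrow> 'a::real_inner"
  assumes sym: "\<And>i j. i<N \<Longrightarrow> j<N \<Longrightarrow> B i j = B j i"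
    and balance: "\<And>i. i<N \<Longrightarrow> (\<Sum>j<N. B i j *\<^sub>R (y i - y j - z i)) = 0"
  shows "(\<Sum>i<N. \<Sum>j<N. B i j * (norm (y i - y j))\<^sup>2)
       - (\<Sum>i<N. \<Sum>j<N. B i j * (norm ((y i - z i) - (y j - z j)))\<^sup>2)
       = (\<Sum>i<N. \<Sum>j<N. B i j * (norm (z i + z j))\<^sup>2)"
proof -
  define p where "p i j = inner (y i - y j - z i) (z i)" for i j
  have pointwise: "(norm (y i - y j))\<^sup>2 - (norm ((y i - z i) - (y j - z j)))\<^sup>2 - (norm (z i + z j))\<^sup>2
        = 2 * p i j + 2 * p j i" for i j
    unfolding p_def by (simp add: power2_norm_eq_inner inner_simps algebra_simps inner_commute)
  have p_sum: "(\<Sum>i<N. \<Sum>j<N. B i j * p i j) = 0"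
  proof -
    have "(\<Sum>i<N. \<Sum>j<N. B i j * p i j)
        = (\<Sum>i<N. inner (\<Sum>j<N. B i j *\<^sub>R (y i - y j - z i)) (z i))"
      unfolding p_def by (simp add: inner_sum_left)
    then show ?thesis using balance by simp
  qed
  have p_swap: "(\<Sum>i<N. \<Sum>j<N. B i j * p j i) = (\<Sum>i<N. \<Sum>j<N. B i j * p i j)"
  proof -
    have "(\<Sum>i<N. \<Sum>j<N. B i j * p j i) = (\<Sum>i<N. \<Sum>j<N. B j i * p j i)"
      using sym by (intro sum.cong refl) auto
    also have "\<dots> = (\<Sum>i<N. \<Sum>j<N. B i j * p i j)" by (rule sum.swap)
    finally show ?thesis .
  qed
  have "(\<Sum>i<N. \<Sum>j<N. B i j * (norm (y i - y j))\<^sup>2)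
       - (\<Sum>i<N. \<Sum>j<N. B i j * (norm ((y i - z i) - (y j - z j)))\<^sup>2)
       - (\<Sum>i<N. \<Sum>j<N. B i j * (norm (z i + z j))\<^sup>2)
     = (\<Sum>i<N. \<Sum>j<N. B i j * ((norm (y i - y j))\<^sup>2 - (norm ((y i - z i) - (y j - z j)))\<^sup>2
                                   - (norm (z i + z j))\<^sup>2))"
    by (simp add: right_diff_distrib sum_subtractf)
  also have "\<dots> = (\<Sum>i<N. \<Sum>j<N. 2 * (B i j * p i j) + 2 * (B i j * p j i))"
    by (simp only: pointwise) (simp add: algebra_simps)
  also have "\<dots> = 0" by (simp add: sum.distrib sum_distrib_left[symmetric] p_sum p_swap)
  finally show ?thesis by simp
qed

lemma norm_sq_affine_combination:
  fixes c :: "nat \<Rightarrow> real" and y :: "nat \<Rightarrow> 'a::real_inner"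
  assumes "(\<Sum>j<N. c j) = 1"
  shows "(norm (\<Sum>j<N. c j *\<^sub>R y j))\<^sup>2 = (\<Sum>j<N. c j * (norm (y j))\<^sup>2)
           - (1/2) * (\<Sum>j<N. \<Sum>l<N. c j * c l * (norm (y j - y l))\<^sup>2)"
proof -
  have cross: "(norm (\<Sum>j<N. c j *\<^sub>R y j))\<^sup>2 = (\<Sum>j<N. \<Sum>l<N. c j * c l * inner (y j) (y l))"
    by (simp add: power2_norm_eq_inner inner_sum_left inner_sum_right sum_distrib_left)
       (subst sum.swap, simp add: mult_ac)
  have left: "(\<Sum>j<N. \<Sum>l<N. c j * c l * (norm (y j))\<^sup>2) = (\<Sum>j<N. c j * (norm (y j))\<^sup>2)"
    by (simp add: sum_distrib_left[symmetric] sum_distrib_right[symmetric] assms mult_ac)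
  have right: "(\<Sum>j<N. \<Sum>l<N. c j * c l * (norm (y l))\<^sup>2) = (\<Sum>j<N. c j * (norm (y j))\<^sup>2)"
    using left by (subst sum.swap) (simp add: mult_ac)
  have "(\<Sum>j<N. \<Sum>l<N. c j * c l * (norm (y j - y l))\<^sup>2)
      = (\<Sum>j<N. \<Sum>l<N. c j * c l * (norm (y j))\<^sup>2 + c j * c l * (norm (y l))\<^sup>2
                        - 2 * (c j * c l * inner (y j) (y l)))"
    by (intro sum.cong refl) (simp add: power2_norm_eq_inner inner_simps inner_commute algebra_simps)
  also have "\<dots> = 2 * (\<Sum>j<N. c j * (norm (y j))\<^sup>2) - 2 * (norm (\<Sum>j<N. c j *\<^sub>R y j))\<^sup>2"
    by (simp only: sum.distrib sum_subtractf cross left right sum_distrib_left[symmetric])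
  finally show ?thesis by linarith
qed

text \<open>For a nonnegative symmetric matrix with zero diagonal, the full double sum is at least
  twice any single row sum (row \<open>i\<close> and column \<open>i\<close> are disjoint parts of it).\<close>
lemma double_sum_ge_twice_row:
  fixes g :: "nat \<Rightarrow> nat \<Rightarrow> real"
  assumes i: "i < N" and nonneg: "\<And>j l. j < N \<Longrightarrow> l < N \<Longrightarrow> 0 \<le> g j l"
    and sym: "\<And>j l. g j l = g l j" and diag: "g i i = 0"
  shows "2 * (\<Sum>l<N. g i l) \<le> (\<Sum>j<N. \<Sum>l<N. g j l)"
proof -
  have split: "(\<Sum>j<N. \<Sum>l<N. g j l) = (\<Sum>l<N. g i l) + (\<Sum>j\<in>{..<N}-{i}. \<Sum>l<N. g j l)"
    using i by (subst sum.remove[of _ i]) auto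
  have "(\<Sum>j\<in>{..<N}-{i}. g j i) \<le> (\<Sum>j\<in>{..<N}-{i}. \<Sum>l<N. g j l)"
    using i nonneg by (intro sum_mono member_le_sum) auto
  moreover have "(\<Sum>l<N. g i l) = g i i + (\<Sum>j\<in>{..<N}-{i}. g i j)"
    using i by (subst sum.remove[of _ i]) auto
  then have "(\<Sum>j\<in>{..<N}-{i}. g j i) = (\<Sum>l<N. g i l)"
    using diag sym by simp
  ultimately show ?thesis using split by simp
qed

lemma coupling_identity:
  fixes \<alpha> \<beta> :: "nat \<Rightarrow> real" and y :: "nat \<Rightarrow> 'a::real_vector"
  assumes "(\<Sum>j<N. \<alpha> j) = M" and "(\<Sum>j<N. \<beta> j) = M"
  shows "M *\<^sub>R ((\<Sum>j<N. \<alpha> j *\<^sub>R y j) - (\<Sum>j<N. \<beta> j *\<^sub>R y j))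
       = (\<Sum>j<N. \<Sum>l<N. (\<alpha> j * \<beta> l) *\<^sub>R (y j - y l))"
proof -
  have "(\<Sum>l<N. (\<alpha> j * \<beta> l) *\<^sub>R y j) = M *\<^sub>R (\<alpha> j *\<^sub>R y j)" for j
    by (simp only: scaleR_sum_left[symmetric] sum_distrib_left[symmetric] assms(2)) (simp add: mult.commute)
  then have first: "(\<Sum>j<N. \<Sum>l<N. (\<alpha> j * \<beta> l) *\<^sub>R y j) = M *\<^sub>R (\<Sum>j<N. \<alpha> j *\<^sub>R y j)"
    by (simp add: scaleR_sum_right)
  have "(\<Sum>j<N. (\<alpha> j * \<beta> l) *\<^sub>R y l) = M *\<^sub>R (\<beta> l *\<^sub>R y l)" for l
    by (simp only: scaleR_sum_left[symmetric] sum_distrib_right[symmetric] assms(1)) simp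
  then have second: "(\<Sum>j<N. \<Sum>l<N. (\<alpha> j * \<beta> l) *\<^sub>R y l) = M *\<^sub>R (\<Sum>j<N. \<beta> j *\<^sub>R y j)"
    by (subst sum.swap) (simp add: scaleR_sum_right)
  show ?thesis
    by (simp add: scaleR_diff_right sum_subtractf first second)
qed

lemma coupled_term_le:
  fixes a b c D n :: real
  assumes "0 \<le> a" "0 \<le> b" "0 \<le> c" "0 \<le> D"
    and near: "P \<Longrightarrow> Q \<Longrightarrow> n \<le> c" and far: "n \<le> D"
  shows "(a * b) * n \<le> c * (a * b) + D * ((if P then 0 else a) * b + a * (if Q then 0 else b))"
proof -
  have ab: "0 \<le> a * b" and rest: "0 \<le> (if P then 0 else a) * b + a * (if Q then 0 else b)"
    using assms(1,2) by simp_all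
  show ?thesis
  proof (cases "P \<and> Q")
    case True
    then have "(a * b) * n \<le> (a * b) * c" using near ab by (simp add: mult_left_mono)
    then show ?thesis using True by (simp add: mult.commute)
  next
    case False
    then have "a * b \<le> (if P then 0 else a) * b + a * (if Q then 0 else b)"
      using assms(1,2) by auto
    then have "(a * b) * D \<le> D * ((if P then 0 else a) * b + a * (if Q then 0 else b))"
      using \<open>0 \<le> D\<close> by (simp add: mult.commute mult_left_mono)
    moreover have "(a * b) * n \<le> (a * b) * D" using far ab by (rule mult_left_mono)
    moreover have "0 \<le> c * (a * b)" using ab \<open>0 \<le> c\<close> by simp
    ultimately show ?thesis by linarith
  qed
qed

text \<open>Via the coupling identity this bounds how far two
  weighted averages of one cluster can be apart.\<close>
lemma norm_diff_combinations_le: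
  fixes \<alpha> \<beta> :: "nat \<Rightarrow> real" and y :: "nat \<Rightarrow> 'a::real_normed_vector"
  assumes \<alpha>_nonneg: "\<And>j. j < N \<Longrightarrow> 0 \<le> \<alpha> j" and \<beta>_nonneg: "\<And>j. j < N \<Longrightarrow> 0 \<le> \<beta> j"
    and mass: "(\<Sum>j<N. \<alpha> j) = (\<Sum>j<N. \<beta> j)"
    and near: "\<And>j l. j < N \<Longrightarrow> l < N \<Longrightarrow> P j \<Longrightarrow> P l \<Longrightarrow> norm (y j - y l) \<le> c"
    and far: "\<And>j l. j < N \<Longrightarrow> l < N \<Longrightarrow> norm (y j - y l) \<le> D"
    and "0 \<le> c" and "0 \<le> D"
  shows "norm ((\<Sum>j<N. \<alpha> j *\<^sub>R y j) - (\<Sum>j<N. \<beta> j *\<^sub>R y j))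
         \<le> c * (\<Sum>j<N. \<alpha> j) + D * ((\<Sum>j<N. if P j then 0 else \<alpha> j) + (\<Sum>j<N. if P j then 0 else \<beta> j))"
    (is "?lhs \<le> c * ?M + D * (?nA + ?nB)")
proof -
  define \<alpha>' where "\<alpha>' j = (if P j then 0 else \<alpha> j)" for j
  define \<beta>' where "\<beta>' j = (if P j then 0 else \<beta> j)" for j
  have pair: "norm ((\<alpha> j * \<beta> l) *\<^sub>R (y j - y l)) \<le> c * (\<alpha> j * \<beta> l) + D * (\<alpha>' j * \<beta> l + \<alpha> j * \<beta>' l)"
    if j: "j < N" and l: "l < N" for j l
    using coupled_term_le[OF \<alpha>_nonneg[OF j] \<beta>_nonneg[OF l] \<open>0 \<le> c\<close> \<open>0 \<le> D\<close> near[OF j l] far[OF j l]]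
      \<alpha>_nonneg[OF j] \<beta>_nonneg[OF l] by (simp add: \<alpha>'_def \<beta>'_def)
  have M_nonneg: "0 \<le> ?M" using \<alpha>_nonneg by (auto intro: sum_nonneg)
  have "?M * ?lhs = norm (?M *\<^sub>R ((\<Sum>j<N. \<alpha> j *\<^sub>R y j) - (\<Sum>j<N. \<beta> j *\<^sub>R y j)))"
    using M_nonneg by simp
  also have "\<dots> = norm (\<Sum>j<N. \<Sum>l<N. (\<alpha> j * \<beta> l) *\<^sub>R (y j - y l))"
    by (simp only: coupling_identity[OF refl mass[symmetric]])
  also have "\<dots> \<le> (\<Sum>j<N. \<Sum>l<N. norm ((\<alpha> j * \<beta> l) *\<^sub>R (y j - y l)))"
    by (rule order_trans[OF norm_sum sum_mono[OF norm_sum]])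
  also have "\<dots> \<le> (\<Sum>j<N. \<Sum>l<N. c * (\<alpha> j * \<beta> l) + D * (\<alpha>' j * \<beta> l + \<alpha> j * \<beta>' l))"
    using pair by (intro sum_mono) auto
  also have "\<dots> = c * (\<Sum>j<N. \<Sum>l<N. \<alpha> j * \<beta> l)
                   + D * ((\<Sum>j<N. \<Sum>l<N. \<alpha>' j * \<beta> l) + (\<Sum>j<N. \<Sum>l<N. \<alpha> j * \<beta>' l))"
    by (simp only: sum.distrib sum_distrib_left distrib_left)
  also have "\<dots> = ?M * (c * ?M + D * (?nA + ?nB))"
    unfolding sum_product[symmetric] mass[symmetric] \<alpha>'_def \<beta>'_def by (simp add: algebra_simps)
  finally have scaled: "?M * ?lhs \<le> ?M * (c * ?M + D * (?nA + ?nB))" .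
  show ?thesis
  proof (cases "?M = 0")
    case True
    have "\<forall>j\<in>{..<N}. \<alpha> j = 0" "\<forall>j\<in>{..<N}. \<beta> j = 0"
      using True mass \<alpha>_nonneg \<beta>_nonneg sum_nonneg_eq_0_iff[of "{..<N}" \<alpha>]
        sum_nonneg_eq_0_iff[of "{..<N}" \<beta>] by auto
    then have "?lhs = 0" by simp
    moreover have "0 \<le> ?nA" "0 \<le> ?nB" using \<alpha>_nonneg \<beta>_nonneg by (auto intro: sum_nonneg)
    ultimately show ?thesis using True \<open>0 \<le> D\<close> by simp
  next
    case False
    then show ?thesis using scaled M_nonneg by (simp add: mult_le_cancel_left_pos)
  qed
qed

lemma frequently_ge_if_not_tendsto_0:
  fixes d :: "nat \<Rightarrow> real"
  assumes nonneg: "\<And>t. 0 \<le> d t" and not_lim: "\<not> d \<longlonglongrightarrow> 0"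
  obtains \<epsilon> where "\<epsilon> > 0" and "\<And>T. \<exists>t\<ge>T. \<epsilon> \<le> d t"
proof -
  have "\<exists>\<epsilon>>0. \<forall>T. \<exists>t\<ge>T. \<epsilon> \<le> d t"
  proof (rule ccontr)
    assume "\<not> ?thesis"
    then have small: "\<forall>\<epsilon>>0. \<exists>T. \<forall>t\<ge>T. d t < \<epsilon>" by (meson not_le)
    have "d \<longlonglongrightarrow> 0"
    proof (rule LIMSEQ_I)
      fix r :: real assume "0 < r"
      then obtain T where "\<forall>t\<ge>T. d t < r" using small by blast
      then show "\<exists>T. \<forall>t\<ge>T. norm (d t - 0) < r" using nonneg by auto
    qed
    with not_lim show False ..
  qed
  then show ?thesis using that by blast
qed

lemma stays_above_band:
  fixes d :: "nat \<Rightarrow> real"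
  assumes slow: "\<And>t. t \<ge> T \<Longrightarrow> \<bar>d (Suc t) - d t\<bar> < \<eta> / 2"
    and gap: "\<And>t. t \<ge> T \<Longrightarrow> \<not> (\<eta> / 2 \<le> d t \<and> d t \<le> \<eta>)"
    and start: "t0 \<ge> T" "d t0 > \<eta>"
  shows "d (t0 + k) > \<eta>"
proof (induction k)
  case 0
  then show ?case using start by simp
next
  case (Suc k)
  then have "d (Suc (t0 + k)) > \<eta> / 2" using slow[of "t0 + k"] start by linarith
  then show ?case using gap[of "Suc (t0 + k)"] start by auto
qed

lemma perturbed_contraction_sum:
  fixes c s :: "nat \<Rightarrow> real"
  assumes step: "\<And>n. c (Suc n) \<le> (1 - \<gamma>) * c n + K * s n"
  shows "\<gamma> * (\<Sum>k<n. c k) + c n \<le> c 0 + K * (\<Sum>k<n. s k)"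
proof (induction n)
  case (Suc n)
  then show ?case using step[of n] by (simp add: algebra_simps)
qed simp

text \<open>Summing both recursions bounds the partial
  sums, so both sequences are summable.\<close>
lemma coupled_recursions_summable:
  fixes c s L :: "nat \<Rightarrow> real"
  assumes c_nonneg: "\<And>n. 0 \<le> c n" and s_nonneg: "\<And>n. 0 \<le> s n" and L_nonneg: "\<And>n. 0 \<le> L n"
    and \<gamma>: "0 < \<gamma>" and \<alpha>: "0 < \<alpha>" and "0 \<le> A" and "0 \<le> K"
    and c_step: "\<And>n. c (Suc n) \<le> (1 - \<gamma>) * c n + K * s n"
    and L_step: "\<And>n. L (Suc n) \<le> L n - \<alpha> * s n + A * c n + B * s n"
    and small: "A * K / \<gamma> + B \<le> \<alpha> / 2"
  shows "summable s" and "summable c"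
proof -
  note c_sum = perturbed_contraction_sum[of c \<gamma> K s, OF c_step]
  have L_sum: "L n + \<alpha> * (\<Sum>k<n. s k) \<le> L 0 + A * (\<Sum>k<n. c k) + B * (\<Sum>k<n. s k)" for n
  proof (induction n)
    case (Suc n)
    then show ?case using L_step[of n] by (simp add: algebra_simps)
  qed simp
  define bound where "bound = 2 * (L 0 + A * c 0 / \<gamma>) / \<alpha>"
  have s_bound: "(\<Sum>k<n. s k) \<le> bound" for n
  proof -
    define Ss where "Ss = (\<Sum>k<n. s k)"
    have Ss_nonneg: "0 \<le> Ss" unfolding Ss_def using s_nonneg by (auto intro: sum_nonneg)
    have "(\<Sum>k<n. c k) \<le> (c 0 + K * Ss) / \<gamma>"
      using c_sum[of n] c_nonneg[of n] \<gamma> unfolding Ss_def by (simp add: field_simps)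
    then have "A * (\<Sum>k<n. c k) \<le> A * c 0 / \<gamma> + (A * K / \<gamma>) * Ss"
      using \<open>0 \<le> A\<close> by (auto dest: mult_left_mono simp: add_divide_distrib algebra_simps)
    moreover have "(A * K / \<gamma> + B) * Ss \<le> \<alpha> / 2 * Ss"
      using small Ss_nonneg by (rule mult_right_mono)
    moreover have "(A * K / \<gamma> + B) * Ss = (A * K / \<gamma>) * Ss + B * Ss" "\<alpha> * Ss = 2 * (\<alpha> / 2 * Ss)"
      by (simp_all add: distrib_right)
    ultimately have "\<alpha> / 2 * Ss \<le> L 0 + A * c 0 / \<gamma>"
      using L_sum[of n] L_nonneg[of n] unfolding Ss_def by linarith
    then show ?thesis using \<alpha> unfolding Ss_def bound_def by (simp add: field_simps)
  qed
  show "summable s" by (rule summableI_nonneg_bounded[OF s_nonneg s_bound])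
  show "summable c"
  proof (rule summableI_nonneg_bounded[OF c_nonneg])
    fix n
    have "\<gamma> * (\<Sum>k<n. c k) \<le> c 0 + K * bound"
      using c_sum[of n] c_nonneg[of n] mult_left_mono[OF s_bound[of n] \<open>0 \<le> K\<close>] by linarith
    then show "(\<Sum>k<n. c k) \<le> (c 0 + K * bound) / \<gamma>" using \<gamma> by (simp add: field_simps)
  qed
qed

locale blurring_mean_shift =
  fixes f :: "real^'p \<Rightarrow> real" and w :: "nat \<Rightarrow> real" and N :: nat
    and x :: "nat \<Rightarrow> real^'p" and \<phi> :: "real \<Rightarrow> real"
  assumes N_pos: "N \<ge> 1" and w_pos: "\<And>j. j < N \<Longrightarrow> w j > 0"
    and f_range: "\<And>u. 0 \<le> f u \<and> f u \<le> 1" and f_eq_1: "\<And>u. f u = 1 \<longleftrightarrow> u = 0"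
    and f_radial: "\<And>u. f u = \<phi> (norm u)"
    and \<phi>_decreasing: "\<And>a b. 0 \<le> a \<Longrightarrow> a \<le> b \<Longrightarrow> \<phi> b \<le> \<phi> a"
begin

definition "X t i = bms f w N x t i"
definition "F t i j = f (X t i - X t j)"
definition "S t i = (\<Sum>j<N. F t i j * w j)"
definition "a t i j = F t i j * w j / S t i"
definition "W = (\<Sum>j<N. w j)"
definition "wmin = Min (w ` {..<N})"

lemma \<phi>_range: assumes "0 \<le> r" shows "0 \<le> \<phi> r" "\<phi> r \<le> 1"
proof -
  have "\<phi> r = f (r *\<^sub>R axis undefined 1)" using assms by (simp add: f_radial)
  then show "0 \<le> \<phi> r" "\<phi> r \<le> 1" using f_range by auto
qed

lemma wmin_pos: "wmin > 0"
  unfolding wmin_def using N_pos w_pos by (subst Min_gr_iff) (auto simp: lessThan_empty_iff)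

lemma wmin_le: "j < N \<Longrightarrow> wmin \<le> w j"
  unfolding wmin_def by (rule Min_le) auto

lemma w_nonneg: "j < N \<Longrightarrow> 0 \<le> w j" using w_pos by (simp add: less_imp_le)

lemma w_le_W: "j < N \<Longrightarrow> w j \<le> W"
  unfolding W_def using w_pos by (intro member_le_sum) (auto intro: less_imp_le)

lemma W_pos: "W > 0" using w_le_W[of 0] w_pos[of 0] N_pos by auto

lemma F_range: "0 \<le> F t i j" "F t i j \<le> 1" unfolding F_def using f_range by auto
lemma F_diag: "F t i i = 1" unfolding F_def using f_eq_1 by simp
lemma F_sym: "F t i j = F t j i" unfolding F_def f_radial by (simp add: norm_minus_commute)

text \<open>The normaliser is bounded below by the point's own weight (diagonal term) and above by
  the total weight; in particular the iteration is well defined.\<close>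
lemma S_ge: "i < N \<Longrightarrow> w i \<le> S t i"
proof -
  assume i: "i < N"
  have "F t i i * w i \<le> S t i" unfolding S_def
    using i by (intro member_le_sum) (auto intro!: mult_nonneg_nonneg F_range w_nonneg)
  then show ?thesis by (simp add: F_diag)
qed

lemma S_pos: "i < N \<Longrightarrow> S t i > 0" using S_ge w_pos by (meson less_le_trans)

lemma S_le: "S t i \<le> W"
  unfolding S_def W_def using F_range w_pos
  by (intro sum_mono) (auto intro: mult_left_le_one_le less_imp_le)

lemma a_nonneg: "j < N \<Longrightarrow> 0 \<le> a t i j"
  unfolding a_def S_def
  by (auto intro!: divide_nonneg_nonneg sum_nonneg mult_nonneg_nonneg F_range w_nonneg)

lemma a_sum: "i < N \<Longrightarrow> (\<Sum>j<N. a t i j) = 1"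
  unfolding a_def using S_pos[of i t] by (simp add: sum_divide_distrib[symmetric] S_def)

lemma a_ge: assumes i: "i < N" and j: "j < N" shows "F t i j * (wmin / W) \<le> a t i j"
proof -
  have "F t i j * (wmin / W) \<le> F t i j * (w j / S t i)"
    using F_range[of t i j] wmin_le[OF j] S_le[of t i] S_pos[OF i, of t] wmin_pos
    by (intro mult_left_mono frac_le) auto
  then show ?thesis by (simp add: a_def)
qed

lemma a_le: assumes i: "i < N" and j: "j < N" shows "a t i j \<le> F t i j * (W / wmin)"
proof -
  have "wmin \<le> S t i" using wmin_le[OF i] S_ge[OF i, of t] by simp
  then have "F t i j * (w j / S t i) \<le> F t i j * (W / wmin)"
    using F_range[of t i j] w_le_W[OF j] wmin_pos w_nonneg[OF j]
    by (intro mult_left_mono frac_le) auto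
  then show ?thesis by (simp add: a_def)
qed

lemma X_0: "X 0 i = x i" unfolding X_def by simp

lemma X_Suc: "X (Suc t) i = (\<Sum>j<N. a t i j *\<^sub>R X t j)"
  unfolding X_def a_def F_def S_def
  by (simp add: scaleR_sum_right divide_inverse mult.commute)

text \<open>Every iterate stays in the ball of radius \<open>R\<close> containing the initial points, since
  each step forms convex combinations.\<close>
definition "R = Max (norm ` x ` {..<N})"

lemma R_nonneg: "0 \<le> R"
  unfolding R_def using N_pos by (subst Max_ge_iff) (auto simp: lessThan_empty_iff)

lemma X_bounded: "i < N \<Longrightarrow> norm (X t i) \<le> R"
proof (induction t arbitrary: i)
  case 0
  then show ?case unfolding X_0 R_def by (intro Max_ge) auto
next
  case (Suc t)
  have "norm (X (Suc t) i) \<le> (\<Sum>j<N. norm (a t i j *\<^sub>R X t j))"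
    unfolding X_Suc by (rule norm_sum)
  also have "\<dots> \<le> (\<Sum>j<N. a t i j * R)"
    using Suc.IH a_nonneg by (intro sum_mono) (auto intro: mult_left_mono)
  also have "\<dots> = R" using a_sum[OF Suc.prems] by (simp add: sum_distrib_right[symmetric])
  finally show ?case .
qed


text \<open>The symmetric interaction matrix \<open>B t i j = w\<^sub>i w\<^sub>j F t i j\<close>, the displacement \<open>Z t i\<close>
  of point \<open>i\<close> in step \<open>t\<close>, and the energy \<open>G t = \<Sum>\<^sub>i\<^sub>j w\<^sub>i w\<^sub>j h(\<bar>X t i - X t j\<bar>\<^sup>2)\<close>, where the
  profile \<open>h\<close> is a primitive of \<open>s \<mapsto> \<phi>(\<surd>s)\<close>, hence concave with \<open>h' (d\<^sup>2) = F\<close>.\<close>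
definition "B t i j = w i * w j * F t i j"
definition "Z t i = X t i - X (Suc t) i"
definition "h s = integral {0..s} (\<lambda>u. \<phi> (sqrt u))"
definition "G t = (\<Sum>i<N. \<Sum>j<N. w i * w j * h ((norm (X t i - X t j))\<^sup>2))"
definition "E t = (\<Sum>i<N. (w i)\<^sup>2 * (norm (Z t i))\<^sup>2)"

lemma B_sym: "B t i j = B t j i" unfolding B_def by (simp add: F_sym mult.commute)

lemma B_nonneg: "i < N \<Longrightarrow> j < N \<Longrightarrow> 0 \<le> B t i j"
  unfolding B_def by (intro mult_nonneg_nonneg w_nonneg F_range) auto

lemma B_row_sum: "(\<Sum>j<N. B t i j) = w i * S t i"
  unfolding B_def S_def by (simp add: sum_distrib_left mult_ac)

text \<open>The mean-shift step says that \<open>X (t+1) i\<close> is the \<open>B\<close>-weighted mean of the \<open>X t j\<close>.\<close>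
lemma B_balance: assumes i: "i < N"
  shows "(\<Sum>j<N. B t i j *\<^sub>R (X t i - X t j - Z t i)) = 0"
proof -
  have "(w i * S t i) *\<^sub>R X (Suc t) i = (\<Sum>j<N. (w i * S t i * a t i j) *\<^sub>R X t j)"
    by (simp add: X_Suc scaleR_sum_right)
  also have "\<dots> = (\<Sum>j<N. B t i j *\<^sub>R X t j)"
    using S_pos[OF i, of t] unfolding a_def B_def by (intro sum.cong refl) (simp add: field_simps)
  finally have "(\<Sum>j<N. B t i j *\<^sub>R X t j) = (\<Sum>j<N. B t i j) *\<^sub>R X (Suc t) i"
    by (simp add: B_row_sum)
  then show ?thesis
    unfolding Z_def by (simp add: scaleR_diff_right sum_subtractf scaleR_sum_left)
qed

lemma h_below_tangent: "0 \<le> s \<Longrightarrow> 0 \<le> s' \<Longrightarrow> h s' \<le> h s + \<phi> (sqrt s) * (s' - s)"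
  unfolding h_def by (rule primitive_of_decreasing_below_tangent) (auto intro: \<phi>_decreasing)

lemma h_nonneg: "0 \<le> h s"
  unfolding h_def
  by (intro integral_nonneg decreasing_integrable_on) (auto intro: \<phi>_decreasing \<phi>_range)

lemma G_nonneg: "0 \<le> G t"
  unfolding G_def by (auto intro!: sum_nonneg mult_nonneg_nonneg w_nonneg h_nonneg)

lemma E_nonneg: "0 \<le> E t" unfolding E_def by (auto intro!: sum_nonneg)

text \<open>Concavity of \<open>h\<close> and the polarisation identity: one step lowers the energy by at least
  the \<open>B\<close>-weighted sum of \<open>\<bar>Z t i + Z t j\<bar>\<^sup>2\<close>.\<close>
lemma energy_step:
  "G (Suc t) \<le> G t - (\<Sum>i<N. \<Sum>j<N. B t i j * (norm (Z t i + Z t j))\<^sup>2)"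
proof -
  let ?d = "\<lambda>t i j. (norm (X t i - X t j))\<^sup>2"
  have "G (Suc t) \<le> (\<Sum>i<N. \<Sum>j<N. w i * w j * (h (?d t i j) + F t i j * (?d (Suc t) i j - ?d t i j)))"
    unfolding G_def
  proof (intro sum_mono mult_left_mono)
    fix i j assume "i \<in> {..<N}" "j \<in> {..<N}"
    then show "0 \<le> w i * w j" by (auto intro!: mult_nonneg_nonneg w_nonneg)
    have "\<phi> (sqrt (?d t i j)) = F t i j" by (simp add: F_def f_radial)
    then show "h (?d (Suc t) i j) \<le> h (?d t i j) + F t i j * (?d (Suc t) i j - ?d t i j)"
      using h_below_tangent[of "?d t i j" "?d (Suc t) i j"] by simp
  qed
  also have "\<dots> = G t - ((\<Sum>i<N. \<Sum>j<N. B t i j * ?d t i j) - (\<Sum>i<N. \<Sum>j<N. B t i j * ?d (Suc t) i j))"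
    unfolding G_def B_def by (simp add: sum.distrib sum_subtractf algebra_simps)
  also have "(\<Sum>i<N. \<Sum>j<N. B t i j * ?d t i j) - (\<Sum>i<N. \<Sum>j<N. B t i j * ?d (Suc t) i j)
      = (\<Sum>i<N. \<Sum>j<N. B t i j * (norm (Z t i + Z t j))\<^sup>2)"
  proof -
    have "X (Suc t) k = X t k - Z t k" for k by (simp add: Z_def)
    then show ?thesis
      using weighted_polarization[of N "B t" "X t" "Z t"] B_sym B_balance by simp
  qed
  finally show ?thesis .
qed

text \<open>Keeping only the diagonal terms: the energy drops by at least \<open>4 E t\<close>.\<close>
lemma energy_decrease: "G (Suc t) \<le> G t - 4 * E t"
proof -
  have "(\<Sum>i<N. B t i i * (norm (Z t i + Z t i))\<^sup>2) \<le> (\<Sum>i<N. \<Sum>j<N. B t i j * (norm (Z t i + Z t j))\<^sup>2)"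
    by (intro sum_mono member_le_sum) (auto intro!: mult_nonneg_nonneg B_nonneg)
  moreover have "(\<Sum>i<N. B t i i * (norm (Z t i + Z t i))\<^sup>2) = 4 * E t"
  proof -
    have "norm (Z t i + Z t i) = 2 * norm (Z t i)" for i
      by (metis mult_2 norm_scaleR real_norm_def scaleR_2 abs_numeral)
    then show ?thesis by (simp add: E_def B_def F_diag sum_distrib_left power2_eq_square algebra_simps)
  qed
  ultimately show ?thesis using energy_step[of t] by simp
qed

text \<open>The energy is nonnegative, so the total displacement energy is finite and every
  displacement tends to zero.\<close>
lemma E_summable: "summable E"
proof (rule summableI_nonneg_bounded[where x = "G 0 / 4"])
  fix n
  have "G n + 4 * (\<Sum>k<n. E k) \<le> G 0"
  proof (induction n)
    case (Suc n)
    then show ?case using energy_decrease[of n] by simp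
  qed simp
  then show "(\<Sum>k<n. E k) \<le> G 0 / 4" using G_nonneg[of n] by simp
qed (rule E_nonneg)

lemma displacement_tendsto_0: assumes i: "i < N" shows "(\<lambda>t. norm (Z t i)) \<longlonglongrightarrow> 0"
proof -
  have "(w i)\<^sup>2 * (norm (Z t i))\<^sup>2 \<le> E t" for t
    unfolding E_def using i by (intro member_le_sum) auto
  then have le: "(norm (Z t i))\<^sup>2 \<le> E t / (w i)\<^sup>2" for t
    using w_pos[OF i] by (simp add: field_simps)
  have "(\<lambda>t. (norm (Z t i))\<^sup>2) \<longlonglongrightarrow> 0"
    by (rule Lim_null_comparison[where g="\<lambda>t. E t / (w i)\<^sup>2"])
       (use le summable_LIMSEQ_zero[OF E_summable] in \<open>auto intro: tendsto_divide_zero\<close>)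
  then have "(\<lambda>t. sqrt ((norm (Z t i))\<^sup>2)) \<longlonglongrightarrow> sqrt 0" by (intro tendsto_intros)
  then show ?thesis by simp
qed

text \<open>By symmetry of \<open>B\<close> it equals
  \<open>2 \<Sum>\<^sub>i w\<^sub>i S t i \<langle>Z t i, X t i\<rangle>\<close>, so it is controlled by the displacements.\<close>
definition "Q t = (\<Sum>i<N. \<Sum>j<N. B t i j * (norm (X t i - X t j))\<^sup>2)"

lemma Q_eq: "Q t = 2 * (\<Sum>i<N. (w i * S t i) * inner (Z t i) (X t i))"
proof -
  define q where "q i j = B t i j * inner (X t i - X t j) (X t i)" for i j
  have pointwise: "B t i j * (norm (X t i - X t j))\<^sup>2 = q i j + q j i" for i j
    unfolding q_def
    by (simp add: power2_norm_eq_inner inner_simps B_sym[of t j i] algebra_simps inner_commute)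
  have swap: "(\<Sum>i<N. \<Sum>j<N. q j i) = (\<Sum>i<N. \<Sum>j<N. q i j)" by (rule sum.swap)
  have row: "(\<Sum>j<N. q i j) = (w i * S t i) * inner (Z t i) (X t i)" if i: "i < N" for i
  proof -
    have "(\<Sum>j<N. B t i j *\<^sub>R (X t i - X t j))
        = (\<Sum>j<N. B t i j *\<^sub>R (X t i - X t j - Z t i)) + (\<Sum>j<N. B t i j) *\<^sub>R Z t i"
      by (simp add: scaleR_diff_right sum_subtractf scaleR_sum_left)
    also have "\<dots> = (w i * S t i) *\<^sub>R Z t i" by (simp add: B_balance[OF i] B_row_sum)
    finally have "inner (\<Sum>j<N. B t i j *\<^sub>R (X t i - X t j)) (X t i)
        = (w i * S t i) * inner (Z t i) (X t i)" by simp
    then show ?thesis unfolding q_def by (simp add: inner_sum_left)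
  qed
  have "Q t = 2 * (\<Sum>i<N. \<Sum>j<N. q i j)"
    unfolding Q_def pointwise by (simp add: sum.distrib swap)
  then show ?thesis using row by simp
qed

lemma Q_le: "\<bar>Q t\<bar> \<le> 2 * (W * W * R) * (\<Sum>i<N. norm (Z t i))"
proof -
  have "\<bar>(w i * S t i) * inner (Z t i) (X t i)\<bar> \<le> (W * W * R) * norm (Z t i)" if i: "i < N" for i
  proof -
    have ws: "0 \<le> w i * S t i" "w i * S t i \<le> W * W"
      using i S_pos[of i t] w_nonneg[of i] w_le_W[of i] S_le[of t i] by (auto intro: mult_mono)
    have "\<bar>inner (Z t i) (X t i)\<bar> \<le> norm (Z t i) * R"
      using X_bounded[OF i, of t] Cauchy_Schwarz_ineq2[of "Z t i" "X t i"]
      by (meson mult_left_mono norm_ge_zero order.trans)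
    then have "(w i * S t i) * \<bar>inner (Z t i) (X t i)\<bar> \<le> (W * W) * (norm (Z t i) * R)"
      using ws by (rule_tac mult_mono) auto
    then show ?thesis using w_nonneg[OF i] S_pos[OF i, of t] by (simp add: abs_mult mult_ac)
  qed
  then have "\<bar>\<Sum>i<N. (w i * S t i) * inner (Z t i) (X t i)\<bar> \<le> (\<Sum>i<N. (W * W * R) * norm (Z t i))"
    by (intro order_trans[OF sum_abs sum_mono]) auto
  then show ?thesis by (simp add: Q_eq abs_mult sum_distrib_left[symmetric])
qed

lemma Q_tendsto_0: "Q \<longlonglongrightarrow> 0"
proof (rule Lim_null_comparison)
  show "\<forall>\<^sub>F t in sequentially. norm (Q t) \<le> 2 * (W * W * R) * (\<Sum>i<N. norm (Z t i))"
    using Q_le by simp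
  have "(\<lambda>t. 2 * (W * W * R) * (\<Sum>i<N. norm (Z t i))) \<longlonglongrightarrow> 2 * (W * W * R) * (\<Sum>i<N. 0)"
    by (intro tendsto_intros displacement_tendsto_0) auto
  then show "(\<lambda>t. 2 * (W * W * R) * (\<Sum>i<N. norm (Z t i))) \<longlonglongrightarrow> 0" by simp
qed

text \<open>Consequently, for every pair of points the kernel-weighted squared distance vanishes:
  asymptotically two points are either very close or barely interact.\<close>
lemma kernel_weighted_dist_tendsto_0: assumes i: "i < N" and j: "j < N"
  shows "(\<lambda>t. F t i j * (norm (X t i - X t j))\<^sup>2) \<longlonglongrightarrow> 0"
proof (rule Lim_null_comparison[where g="\<lambda>t. Q t / (wmin * wmin)"])
  show "\<forall>\<^sub>F t in sequentially. norm (F t i j * (norm (X t i - X t j))\<^sup>2) \<le> Q t / (wmin * wmin)"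
  proof (intro always_eventually allI)
    fix t
    let ?\<psi> = "F t i j * (norm (X t i - X t j))\<^sup>2"
    have "B t i j * (norm (X t i - X t j))\<^sup>2 \<le> Q t"
      unfolding Q_def using i j
      by (intro order_trans[OF _ member_le_sum[of i]] member_le_sum)
         (auto intro!: sum_nonneg mult_nonneg_nonneg B_nonneg)
    moreover have "(wmin * wmin) * ?\<psi> \<le> B t i j * (norm (X t i - X t j))\<^sup>2"
    proof -
      have "wmin * wmin \<le> w i * w j"
        using wmin_le[OF i] wmin_le[OF j] wmin_pos by (intro mult_mono) auto
      then have "(wmin * wmin) * ?\<psi> \<le> (w i * w j) * ?\<psi>"
        using F_range[of t i j] by (intro mult_right_mono) auto
      then show ?thesis by (simp add: B_def mult_ac)
    qed
    ultimately show "norm ?\<psi> \<le> Q t / (wmin * wmin)"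
      using wmin_pos F_range[of t i j] by (simp add: field_simps)
  qed
  show "(\<lambda>t. Q t / (wmin * wmin)) \<longlonglongrightarrow> 0"
    using tendsto_divide_zero[OF Q_tendsto_0] by simp
qed


text \<open>If the kernel vanishes off the origin, nothing ever moves: each point only sees itself.\<close>
lemma iterates_stationary:
  assumes vanish: "\<And>u. u \<noteq> 0 \<Longrightarrow> f u = 0" and i: "i < N"
  shows "X t i = x i"
proof (induction t)
  case 0
  then show ?case by (simp add: X_0)
next
  case (Suc t)
  have "a t i j *\<^sub>R X t j = a t i j *\<^sub>R X t i" for j
    by (cases "X t i = X t j") (simp_all add: a_def F_def vanish)
  then have "X (Suc t) i = (\<Sum>j<N. a t i j) *\<^sub>R X t i"
    unfolding X_Suc scaleR_sum_left by (intro sum.cong refl)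
  then show ?case using Suc a_sum[OF i] by simp
qed

lemma coincide_Suc: assumes "X t i = X t j" shows "X (Suc t) i = X (Suc t) j"
proof -
  have "F t i k = F t j k" for k unfolding F_def using assms by simp
  then show ?thesis unfolding X_Suc a_def S_def by simp
qed

lemma coincide_forever: "t \<le> t' \<Longrightarrow> X t i = X t j \<Longrightarrow> X t' i = X t' j"
  by (induction t' rule: dec_induct) (auto intro: coincide_Suc)

definition "d t i j = norm (X t i - X t j)"

lemma d_nonneg: "0 \<le> d t i j" unfolding d_def by simp
lemma d_sym: "d t i j = d t j i" unfolding d_def by (simp add: norm_minus_commute)
lemma d_triangle: "d t i l \<le> d t i j + d t j l"
  unfolding d_def using norm_triangle_ineq[of "X t i - X t j" "X t j - X t l"] by simp
lemma F_eq_\<phi>_d: "F t i j = \<phi> (d t i j)" unfolding F_def d_def f_radial ..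

lemma d_le_2R: "i < N \<Longrightarrow> j < N \<Longrightarrow> d t i j \<le> 2 * R"
  unfolding d_def using X_bounded[of i t] X_bounded[of j t] norm_triangle_ineq4[of "X t i" "X t j"]
  by simp

lemma d_increment_le: "\<bar>d (Suc t) i j - d t i j\<bar> \<le> norm (Z t i) + norm (Z t j)"
proof -
  have "X (Suc t) i - X (Suc t) j = (X t i - X t j) - (Z t i - Z t j)" unfolding Z_def by simp
  then have "\<bar>d (Suc t) i j - d t i j\<bar> \<le> norm (Z t i - Z t j)"
    unfolding d_def using norm_triangle_ineq3[of "(X t i - X t j) - (Z t i - Z t j)" "X t i - X t j"]
    by (simp add: norm_minus_commute)
  also have "\<dots> \<le> norm (Z t i) + norm (Z t j)" by (rule norm_triangle_ineq4)
  finally show ?thesis .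
qed

lemma d_increment_tendsto_0: assumes "i < N" "j < N"
  shows "(\<lambda>t. \<bar>d (Suc t) i j - d t i j\<bar>) \<longlonglongrightarrow> 0"
proof (rule Lim_null_comparison[where g="\<lambda>t. norm (Z t i) + norm (Z t j)"])
  show "\<forall>\<^sub>F t in sequentially. norm \<bar>d (Suc t) i j - d t i j\<bar> \<le> norm (Z t i) + norm (Z t j)"
    using d_increment_le by auto
  show "(\<lambda>t. norm (Z t i) + norm (Z t j)) \<longlonglongrightarrow> 0"
    using tendsto_add[OF displacement_tendsto_0[OF assms(1)] displacement_tendsto_0[OF assms(2)]]
    by simp
qed

text \<open>Two points are \<^emph>\<open>close\<close> if their distance tends to zero; this is an equivalence
  relation whose classes are the eventual clusters.\<close>
definition "close i j \<longleftrightarrow> (\<lambda>t. d t i j) \<longlonglongrightarrow> 0"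

lemma close_refl: "close i i" unfolding close_def d_def by simp
lemma close_sym: "close i j \<Longrightarrow> close j i" unfolding close_def using d_sym by simp
lemma close_trans: assumes "close i j" "close j l" shows "close i l"
  unfolding close_def
proof (rule Lim_null_comparison[where g="\<lambda>t. d t i j + d t j l"])
  show "\<forall>\<^sub>F t in sequentially. norm (d t i l) \<le> d t i j + d t j l"
    using d_triangle d_nonneg by auto
  show "(\<lambda>t. d t i j + d t j l) \<longlonglongrightarrow> 0"
    using tendsto_add[OF assms[unfolded close_def]] by simp
qed

end

text \<open>The nondegenerate case: the kernel is bounded below by \<open>\<kappa> > 0\<close> on a ball of radius
  \<open>r > 0\<close> (for a PDD kernel this holds as soon as it does not vanish off the origin).\<close>
locale blurring_mean_shift_nondegenerate = blurring_mean_shift +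
  fixes r \<kappa> :: real
  assumes r_pos: "r > 0" and \<kappa>_pos: "\<kappa> > 0" and f_ge_\<kappa>: "\<And>u. norm u \<le> r \<Longrightarrow> \<kappa> \<le> f u"
begin

lemma F_ge_\<kappa>: "d t i j \<le> r \<Longrightarrow> \<kappa> \<le> F t i j" unfolding F_def d_def by (rule f_ge_\<kappa>)

lemma \<kappa>_le_1: "\<kappa> \<le> 1" using f_ge_\<kappa>[of 0] f_range[of 0] r_pos by simp

text \<open>Indeed
  \<open>F d\<^sup>2 \<rightarrow> 0\<close> forbids the distance to linger in a band \<open>[\<eta>/2, \<eta>]\<close> with \<open>\<eta> \<le> r\<close> (there
  \<open>F \<ge> \<kappa>\<close>), increments vanish, so a distance that is infinitely often large stays above \<open>\<eta>\<close>,
  and then \<open>F \<le> F d\<^sup>2 / \<eta>\<^sup>2 \<rightarrow> 0\<close>.\<close>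
lemma interaction_tendsto_0: assumes i: "i < N" and j: "j < N" and far: "\<not> close i j"
  shows "(\<lambda>t. F t i j) \<longlonglongrightarrow> 0"
proof -
  obtain \<epsilon> where \<epsilon>: "\<epsilon> > 0" and often: "\<And>T. \<exists>t\<ge>T. \<epsilon> \<le> d t i j"
    using frequently_ge_if_not_tendsto_0[of "\<lambda>t. d t i j"] d_nonneg far by (auto simp: close_def)
  define \<eta> where "\<eta> = min \<epsilon> r / 2"
  have \<eta>: "\<eta> > 0" "\<eta> < \<epsilon>" "\<eta> \<le> r" using \<epsilon> r_pos by (auto simp: \<eta>_def)
  have \<psi>: "(\<lambda>t. F t i j * (d t i j)\<^sup>2) \<longlonglongrightarrow> 0"
    using kernel_weighted_dist_tendsto_0[OF i j] by (simp add: d_def)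
  have "\<forall>\<^sub>F t in sequentially. F t i j * (d t i j)\<^sup>2 < \<kappa> * (\<eta>/2)\<^sup>2"
    using order_tendstoD(2)[OF \<psi>, of "\<kappa> * (\<eta>/2)\<^sup>2"] \<kappa>_pos \<eta> by simp
  moreover have "\<forall>\<^sub>F t in sequentially. \<bar>d (Suc t) i j - d t i j\<bar> < \<eta>/2"
    using order_tendstoD(2)[OF d_increment_tendsto_0[OF i j], of "\<eta>/2"] \<eta> by simp
  ultimately obtain T where T: "\<And>t. t \<ge> T \<Longrightarrow>
      F t i j * (d t i j)\<^sup>2 < \<kappa> * (\<eta>/2)\<^sup>2 \<and> \<bar>d (Suc t) i j - d t i j\<bar> < \<eta>/2"
    unfolding eventually_sequentially by (metis (no_types, lifting) eventually_conj eventually_sequentially)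
  have gap: "\<not> (\<eta>/2 \<le> d t i j \<and> d t i j \<le> \<eta>)" if "t \<ge> T" for t
  proof
    assume band: "\<eta>/2 \<le> d t i j \<and> d t i j \<le> \<eta>"
    then have "\<kappa> \<le> F t i j" using F_ge_\<kappa> \<eta> by auto
    moreover have "(\<eta>/2)\<^sup>2 \<le> (d t i j)\<^sup>2" using band \<eta> by (intro power_mono) auto
    ultimately have "\<kappa> * (\<eta>/2)\<^sup>2 \<le> F t i j * (d t i j)\<^sup>2" using \<kappa>_pos by (intro mult_mono) auto
    with T[OF that] show False by simp
  qed
  obtain t0 where t0: "t0 \<ge> T" "\<epsilon> \<le> d t0 i j" using often by blast
  have above: "\<eta> < d t i j" if "t \<ge> t0" for t
    using stays_above_band[of T "\<lambda>t. d t i j" \<eta> t0 "t - t0"] T gap t0 \<eta> that by simp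
  show ?thesis
  proof (rule Lim_null_comparison[where g="\<lambda>t. F t i j * (d t i j)\<^sup>2 / \<eta>\<^sup>2"])
    show "\<forall>\<^sub>F t in sequentially. norm (F t i j) \<le> F t i j * (d t i j)\<^sup>2 / \<eta>\<^sup>2"
      unfolding eventually_sequentially
    proof (intro exI allI impI)
      fix t assume "t0 \<le> t"
      then have "\<eta>\<^sup>2 \<le> (d t i j)\<^sup>2" using above \<eta> by (intro power_mono) (auto intro: less_imp_le)
      then have "F t i j * \<eta>\<^sup>2 \<le> F t i j * (d t i j)\<^sup>2" using F_range by (intro mult_left_mono) auto
      then show "norm (F t i j) \<le> F t i j * (d t i j)\<^sup>2 / \<eta>\<^sup>2"
        using \<eta> F_range[of t i j] by (simp add: field_simps)
    qed
    show "(\<lambda>t. F t i j * (d t i j)\<^sup>2 / \<eta>\<^sup>2) \<longlonglongrightarrow> 0"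
      using tendsto_divide_zero[OF \<psi>] by simp
  qed
qed


text \<open>The limit of the kernel profile at \<open>0\<^sup>+\<close>, which may differ from \<open>\<phi> 0 = 1\<close>.\<close>
definition "\<phi>0 = (SUP r\<in>{0<..}. \<phi> r)"

lemma \<phi>_bdd_above: "bdd_above (\<phi> ` {0<..})"
  by (rule bdd_aboveI[of _ 1]) (auto intro: \<phi>_range)

lemma \<phi>_le_\<phi>0: "s > 0 \<Longrightarrow> \<phi> s \<le> \<phi>0"
  unfolding \<phi>0_def by (intro cSUP_upper \<phi>_bdd_above) auto

lemma \<phi>_tendsto_\<phi>0: assumes lim: "g \<longlonglongrightarrow> 0" and pos: "\<And>t. g t > 0"
  shows "(\<lambda>t. \<phi> (g t)) \<longlonglongrightarrow> \<phi>0"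
proof (rule order_tendstoI)
  fix y assume "y < \<phi>0"
  then obtain s where s: "s > 0" "y < \<phi> s"
    unfolding \<phi>0_def using less_cSUP_iff[OF _ \<phi>_bdd_above] by force
  have "\<forall>\<^sub>F t in sequentially. g t < s" using order_tendstoD(2)[OF lim s(1)] .
  then show "\<forall>\<^sub>F t in sequentially. y < \<phi> (g t)"
  proof eventually_elim
    case (elim t)
    then show ?case using \<phi>_decreasing[of "g t" s] pos[of t] s by simp
  qed
next
  fix y assume "\<phi>0 < y"
  then show "\<forall>\<^sub>F t in sequentially. \<phi> (g t) < y"
    using \<phi>_le_\<phi>0 pos by (intro always_eventually allI) (auto intro: le_less_trans)
qed

definition "F_lim i j =
  (if close i j then (if \<exists>t. d t i j = 0 then 1 else \<phi>0) else 0)"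

lemma F_tendsto: assumes i: "i < N" and j: "j < N" shows "(\<lambda>t. F t i j) \<longlonglongrightarrow> F_lim i j"
proof (cases "close i j")
  case False
  then show ?thesis using interaction_tendsto_0[OF i j] by (simp add: F_lim_def)
next
  case close: True
  show ?thesis
  proof (cases "\<exists>t. d t i j = 0")
    case True
    then obtain t0 where "X t0 i = X t0 j" by (auto simp: d_def)
    then have "\<forall>\<^sub>F t in sequentially. F t i j = 1"
      unfolding eventually_sequentially by (auto simp: F_def f_eq_1 dest: coincide_forever)
    then have "(\<lambda>t. F t i j) \<longlonglongrightarrow> 1" by (rule tendsto_eventually)
    then show ?thesis using True close by (simp add: F_lim_def)
  next
    case False
    then have "\<And>t. d t i j > 0" using d_nonneg by (metis less_eq_real_def)
    then have "(\<lambda>t. \<phi> (d t i j)) \<longlonglongrightarrow> \<phi>0"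
      using \<phi>_tendsto_\<phi>0[of "\<lambda>t. d t i j"] close by (simp add: close_def)
    then show ?thesis using False close by (simp add: F_lim_def F_eq_\<phi>_d)
  qed
qed

definition "S_lim i = (\<Sum>j<N. F_lim i j * w j)"

lemma S_tendsto: "i < N \<Longrightarrow> (\<lambda>t. S t i) \<longlonglongrightarrow> S_lim i"
  unfolding S_def S_lim_def by (intro tendsto_sum tendsto_mult F_tendsto tendsto_const) auto

lemma S_lim_ge: "i < N \<Longrightarrow> w i \<le> S_lim i"
  by (rule LIMSEQ_le_const[OF S_tendsto]) (auto intro: S_ge)

lemma S_lim_pos: "i < N \<Longrightarrow> S_lim i > 0" using S_lim_ge w_pos by (meson less_le_trans)

definition "\<rho> t i = S_lim i / S t i"
definition "\<theta> t = (\<Sum>i<N. \<bar>\<rho> t i - 1\<bar>)"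

lemma \<theta>_tendsto_0: "\<theta> \<longlonglongrightarrow> 0"
proof -
  have "(\<lambda>t. \<rho> t i) \<longlonglongrightarrow> 1" if "i < N" for i
  proof -
    have "(\<lambda>t. S_lim i / S t i) \<longlonglongrightarrow> S_lim i / S_lim i"
      using S_lim_pos[OF that] by (intro tendsto_divide tendsto_const S_tendsto that) auto
    then show ?thesis using S_lim_pos[OF that] by (simp add: \<rho>_def)
  qed
  then have "(\<lambda>t. \<Sum>i<N. \<bar>\<rho> t i - 1\<bar>) \<longlonglongrightarrow> (\<Sum>i<N. \<bar>1 - 1\<bar>)"
    by (intro tendsto_intros) auto
  then show ?thesis by (simp add: \<theta>_def[abs_def])
qed

lemma \<theta>_ge: "i < N \<Longrightarrow> \<bar>\<rho> t i - 1\<bar> \<le> \<theta> t"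
  unfolding \<theta>_def by (intro member_le_sum) auto

lemma \<theta>_nonneg: "0 \<le> \<theta> t" unfolding \<theta>_def by (auto intro!: sum_nonneg)


definition "good t \<longleftrightarrow>
  (\<forall>i<N. \<forall>j<N. (close i j \<longrightarrow> d t i j \<le> r) \<and> (\<not> close i j \<longrightarrow> F t i j < \<kappa>))"

lemma eventually_good: "eventually good sequentially"
proof -
  have "\<forall>\<^sub>F t in sequentially. (close i j \<longrightarrow> d t i j \<le> r) \<and> (\<not> close i j \<longrightarrow> F t i j < \<kappa>)"
    if "i < N" "j < N" for i j
  proof (cases "close i j")
    case True
    then have "\<forall>\<^sub>F t in sequentially. d t i j < r"
      using order_tendstoD(2)[of "\<lambda>t. d t i j" 0 sequentially r] r_pos by (simp add: close_def)
    then show ?thesis by (rule eventually_mono) (use True in auto)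
  next
    case False
    then have "\<forall>\<^sub>F t in sequentially. F t i j < \<kappa>"
      using order_tendstoD(2)[OF interaction_tendsto_0[OF that False]] \<kappa>_pos by simp
    then show ?thesis by (rule eventually_mono) (use False in auto)
  qed
  then have "\<forall>\<^sub>F t in sequentially. \<forall>i\<in>{..<N}. \<forall>j\<in>{..<N}.
      (close i j \<longrightarrow> d t i j \<le> r) \<and> (\<not> close i j \<longrightarrow> F t i j < \<kappa>)"
    by (intro eventually_ball_finite ballI) auto
  then show ?thesis unfolding good_def by (rule eventually_mono) auto
qed

lemma good_far: "good t \<Longrightarrow> i < N \<Longrightarrow> j < N \<Longrightarrow> \<not> close i j \<Longrightarrow> r < d t i j"
  unfolding good_def using F_ge_\<kappa> by (meson not_le not_less)

lemma good_close: "good t \<Longrightarrow> i < N \<Longrightarrow> j < N \<Longrightarrow> close i j \<Longrightarrow> \<kappa> \<le> F t i j"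
  unfolding good_def using F_ge_\<kappa> by blast

definition "far t = (\<Sum>i<N. \<Sum>j<N. if close i j then 0 else F t i j)"
definition "close_pairs = {p. fst p < N \<and> snd p < N \<and> close (fst p) (snd p)}"
definition "diam t = Max ((\<lambda>p. d t (fst p) (snd p)) ` close_pairs)"

lemma close_pairs_finite: "finite close_pairs"
  by (rule finite_subset[of _ "{..<N} \<times> {..<N}"]) (auto simp: close_pairs_def)

lemma close_pairs_nonempty: "close_pairs \<noteq> {}"
  using N_pos close_refl[of 0] unfolding close_pairs_def by force

lemma d_le_diam: "i < N \<Longrightarrow> j < N \<Longrightarrow> close i j \<Longrightarrow> d t i j \<le> diam t"
  unfolding diam_def using close_pairs_finite
  by (intro Max_ge) (auto simp: close_pairs_def image_iff intro!: bexI[of _ "(i,j)"])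

lemma diam_nonneg: "0 \<le> diam t"
  using d_le_diam[of 0 0 t] N_pos close_refl[of 0] d_nonneg[of t 0 0] by simp

lemma far_nonneg: "0 \<le> far t" unfolding far_def using F_range by (auto intro!: sum_nonneg)

definition "leak t i = (\<Sum>j<N. if close i j then 0 else a t i j)"

lemma leak_le: assumes i: "i < N" shows "leak t i \<le> (W / wmin) * far t"
proof -
  have "leak t i \<le> (\<Sum>j<N. if close i j then 0 else F t i j * (W / wmin))"
    unfolding leak_def using a_le[OF i] by (intro sum_mono) auto
  also have "\<dots> = (W / wmin) * (\<Sum>j<N. if close i j then 0 else F t i j)"
    by (simp add: sum_distrib_left if_distrib mult.commute cong: if_cong)
  also have "\<dots> \<le> (W / wmin) * far t"
  proof (rule mult_left_mono)
    show "(\<Sum>j<N. if close i j then 0 else F t i j) \<le> far t"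
      unfolding far_def using i F_range by (intro member_le_sum) (auto intro!: sum_nonneg)
  qed (use wmin_pos W_pos in auto)
  finally show ?thesis .
qed

definition "\<gamma> = \<kappa> * wmin / W"

lemma \<gamma>_pos: "\<gamma> > 0" unfolding \<gamma>_def using \<kappa>_pos wmin_pos W_pos by simp

lemma common_weight_ge:
  assumes g: "good t" and i: "i < N" and k: "k < N" and ik: "close i k"
  shows "\<gamma> \<le> min (a t i i) (a t k i)"
proof -
  have "\<kappa> * (wmin / W) \<le> F t k i * (wmin / W)"
    using good_close[OF g k i close_sym[OF ik]] wmin_pos W_pos by (intro mult_right_mono) auto
  moreover have "\<kappa> * (wmin / W) \<le> F t i i * (wmin / W)"
    using \<kappa>_le_1 wmin_pos W_pos by (intro mult_right_mono) (auto simp: F_diag)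
  ultimately show ?thesis using a_ge[OF k i, of t] a_ge[OF i i, of t] by (simp add: \<gamma>_def)
qed

text \<open>The new positions of \<open>i\<close> and \<open>k\<close> are averages
  whose coefficients share the common part \<open>m\<close> (of mass \<open>\<ge> \<gamma>\<close>) on their cluster; the
  remaining parts have equal mass \<open>\<le> 1 - \<gamma>\<close>, and \<open>norm_diff_combinations_le\<close> applies.\<close>
lemma diam_pair_step:
  assumes g: "good t" and i: "i < N" and k: "k < N" and ik: "close i k"
  shows "d (Suc t) i k \<le> (1 - \<gamma>) * diam t + 2 * R * (leak t i + leak t k)"
proof -
  define m where "m j = (if close i j then min (a t i j) (a t k j) else 0)" for j
  define \<alpha> where "\<alpha> j = a t i j - m j" for j
  define \<beta> where "\<beta> j = a t k j - m j" for j
  have \<alpha>_nonneg: "0 \<le> \<alpha> j" and \<beta>_nonneg: "0 \<le> \<beta> j" if "j < N" for j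
    unfolding \<alpha>_def \<beta>_def m_def using a_nonneg[OF that] by auto
  have \<alpha>_sum: "(\<Sum>j<N. \<alpha> j) = 1 - (\<Sum>j<N. m j)"
    unfolding \<alpha>_def using a_sum[OF i] by (simp add: sum_subtractf)
  have \<beta>_sum: "(\<Sum>j<N. \<beta> j) = 1 - (\<Sum>j<N. m j)"
    unfolding \<beta>_def using a_sum[OF k] by (simp add: sum_subtractf)
  have "X (Suc t) i - X (Suc t) k = (\<Sum>j<N. \<alpha> j *\<^sub>R X t j) - (\<Sum>j<N. \<beta> j *\<^sub>R X t j)"
    unfolding X_Suc \<alpha>_def \<beta>_def by (simp add: scaleR_diff_left sum_subtractf)
  moreover have "norm ((\<Sum>j<N. \<alpha> j *\<^sub>R X t j) - (\<Sum>j<N. \<beta> j *\<^sub>R X t j))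
      \<le> diam t * (\<Sum>j<N. \<alpha> j) + (2 * R) *
         ((\<Sum>j<N. if close i j then 0 else \<alpha> j) + (\<Sum>j<N. if close i j then 0 else \<beta> j))"
  proof (rule norm_diff_combinations_le[OF \<alpha>_nonneg \<beta>_nonneg])
    show "norm (X t j - X t l) \<le> diam t" if "j < N" "l < N" "close i j" "close i l" for j l
      using d_le_diam[OF that(1,2)] close_trans[OF close_sym[OF that(3)] that(4)] by (simp add: d_def)
    show "norm (X t j - X t l) \<le> 2 * R" if "j < N" "l < N" for j l
      using d_le_2R[OF that] by (simp add: d_def)
    show "(\<Sum>j<N. \<alpha> j) = (\<Sum>j<N. \<beta> j)" using \<alpha>_sum \<beta>_sum by simp
  qed (use diam_nonneg R_nonneg in simp_all)
  moreover have "(\<Sum>j<N. if close i j then 0 else \<alpha> j) = leak t i"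
    unfolding leak_def \<alpha>_def m_def by (intro sum.cong refl) auto
  moreover have "(\<Sum>j<N. if close i j then 0 else \<beta> j) = leak t k"
    unfolding leak_def \<beta>_def m_def
    using close_trans[OF ik] close_trans[OF close_sym[OF ik]] by (intro sum.cong refl) auto
  moreover have "diam t * (\<Sum>j<N. \<alpha> j) \<le> diam t * (1 - \<gamma>)"
  proof (rule mult_left_mono)
    have "\<gamma> \<le> m i" using common_weight_ge[OF g i k ik] close_refl[of i] by (simp add: m_def)
    moreover have "m i \<le> (\<Sum>j<N. m j)"
      using i by (intro member_le_sum) (auto simp: m_def intro: a_nonneg)
    ultimately show "(\<Sum>j<N. \<alpha> j) \<le> 1 - \<gamma>" using \<alpha>_sum by simp
  qed (rule diam_nonneg)
  ultimately show ?thesis by (simp add: d_def mult.commute)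
qed

lemma diam_step:
  assumes g: "good t"
  shows "diam (Suc t) \<le> (1 - \<gamma>) * diam t + 4 * R * (W / wmin) * far t"
  unfolding diam_def[of "Suc t"]
proof (rule Max.boundedI)
  show "finite ((\<lambda>p. d (Suc t) (fst p) (snd p)) ` close_pairs)" using close_pairs_finite by simp
  show "(\<lambda>p. d (Suc t) (fst p) (snd p)) ` close_pairs \<noteq> {}" using close_pairs_nonempty by simp
next
  fix v assume "v \<in> (\<lambda>p. d (Suc t) (fst p) (snd p)) ` close_pairs"
  then obtain i k where ik: "i < N" "k < N" "close i k" "v = d (Suc t) i k"
    by (auto simp: close_pairs_def)
  have "2 * R * (leak t i + leak t k) \<le> 2 * R * ((W / wmin) * far t + (W / wmin) * far t)"
    using leak_le[OF ik(1)] leak_le[OF ik(2)] R_nonneg by (intro mult_left_mono add_mono) auto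
  then show "v \<le> (1 - \<gamma>) * diam t + 4 * R * (W / wmin) * far t"
    using diam_pair_step[OF g ik(1,2,3)] ik(4) by (simp add: algebra_simps)
qed

lemma displacement_le: assumes g: "good t" and i: "i < N"
  shows "norm (Z t i) \<le> diam t + 2 * R * (W / wmin) * far t"
proof -
  have "Z t i = (\<Sum>j<N. a t i j *\<^sub>R (X t i - X t j))"
    unfolding Z_def X_Suc using a_sum[OF i]
    by (simp add: scaleR_diff_right sum_subtractf scaleR_sum_left[symmetric])
  then have "norm (Z t i) \<le> (\<Sum>j<N. a t i j * d t i j)"
    using a_nonneg by (auto simp: d_def intro!: order_trans[OF norm_sum] sum_mono)
  also have "\<dots> \<le> (\<Sum>j<N. a t i j * diam t + 2 * R * (if close i j then 0 else a t i j))"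
  proof (intro sum_mono)
    fix j assume j: "j \<in> {..<N}"
    then have a0: "0 \<le> a t i j" using a_nonneg by auto
    show "a t i j * d t i j \<le> a t i j * diam t + 2 * R * (if close i j then 0 else a t i j)"
    proof (cases "close i j")
      case True
      then show ?thesis using d_le_diam[of i j t] i j a0 by (simp add: mult_left_mono)
    next
      case False
      have "a t i j * d t i j \<le> a t i j * (2 * R)"
        using d_le_2R[of i j t] i j a0 by (simp add: mult_left_mono)
      moreover have "0 \<le> a t i j * diam t" using a0 diam_nonneg[of t] by simp
      moreover have "a t i j * (2 * R) = 2 * R * a t i j" by simp
      ultimately show ?thesis using False by simp
    qed
  qed
  also have "\<dots> = diam t + 2 * R * leak t i"
    using a_sum[OF i] unfolding leak_def
    by (simp add: sum.distrib sum_distrib_left[symmetric] sum_distrib_right[symmetric])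
  also have "\<dots> \<le> diam t + 2 * R * ((W / wmin) * far t)"
    using leak_le[OF i, of t] R_nonneg by (intro add_left_mono mult_left_mono) auto
  finally show ?thesis by (simp add: mult_ac)
qed


text \<open>With the
  current weights \<open>w\<^sub>i S t i\<close> it would be nonincreasing exactly (the step matrix is then
  self-adjoint); freezing costs an error proportional to \<open>\<theta> t\<close>, while cross-cluster
  interaction strictly decreases it.\<close>
definition "\<omega> i = w i * S_lim i"
definition "L t = (\<Sum>i<N. \<omega> i * (norm (X t i))\<^sup>2)"

lemma \<omega>_ge: assumes i: "i < N" shows "wmin\<^sup>2 \<le> \<omega> i"
proof -
  have "wmin \<le> S_lim i" using wmin_le[OF i] S_lim_ge[OF i] by simp
  then show ?thesis
    unfolding \<omega>_def power2_eq_square using wmin_le[OF i] wmin_pos by (intro mult_mono) auto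
qed

lemma \<omega>_nonneg: "i < N \<Longrightarrow> 0 \<le> \<omega> i"
  using \<omega>_ge[of i] by (meson order.trans zero_le_power2)

lemma L_nonneg: "0 \<le> L t"
  unfolding L_def by (auto intro!: sum_nonneg mult_nonneg_nonneg \<omega>_nonneg)

lemma norm_sq_step: assumes i: "i < N"
  shows "(norm (X (Suc t) i))\<^sup>2
    \<le> (\<Sum>j<N. a t i j * (norm (X t j))\<^sup>2) - a t i i * (\<Sum>l<N. a t i l * (d t i l)\<^sup>2)"
proof -
  have "2 * (\<Sum>l<N. a t i i * a t i l * (norm (X t i - X t l))\<^sup>2)
      \<le> (\<Sum>j<N. \<Sum>l<N. a t i j * a t i l * (norm (X t j - X t l))\<^sup>2)"
    by (rule double_sum_ge_twice_row[OF i])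
       (auto intro!: mult_nonneg_nonneg a_nonneg simp: norm_minus_commute)
  moreover have "a t i i * (\<Sum>l<N. a t i l * (d t i l)\<^sup>2)
      = (\<Sum>l<N. a t i i * a t i l * (norm (X t i - X t l))\<^sup>2)"
    by (simp add: d_def sum_distrib_left mult_ac)
  ultimately show ?thesis
    unfolding X_Suc norm_sq_affine_combination[OF a_sum[OF i]] by linarith
qed

lemma frozen_average_eq:
  "(\<Sum>i<N. \<omega> i * (\<Sum>j<N. a t i j * (norm (X t j))\<^sup>2))
    = L t + (\<Sum>i<N. \<Sum>j<N. (\<rho> t i - 1) * B t i j * ((norm (X t j))\<^sup>2 - (norm (X t i))\<^sup>2))"
proof -
  let ?g = "\<lambda>j. (norm (X t j))\<^sup>2"
  have row: "\<omega> i * (\<Sum>j<N. a t i j * ?g j) = \<omega> i * ?g i + (\<Sum>j<N. \<rho> t i * B t i j * (?g j - ?g i))"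
    if i: "i < N" for i
  proof -
    have "(\<Sum>j<N. a t i j * ?g j) = ?g i + (\<Sum>j<N. a t i j * (?g j - ?g i))"
      using a_sum[OF i] by (simp add: right_diff_distrib sum_subtractf sum_distrib_right[symmetric])
    moreover have "\<omega> i * a t i j = \<rho> t i * B t i j" for j
      using S_pos[OF i, of t] unfolding \<omega>_def a_def \<rho>_def B_def by (simp add: field_simps)
    ultimately show ?thesis by (simp add: distrib_left sum_distrib_left mult.assoc[symmetric])
  qed
  have antisym: "(\<Sum>i<N. \<Sum>j<N. B t i j * (?g j - ?g i)) = 0"
  proof -
    have "(\<Sum>i<N. \<Sum>j<N. B t i j * ?g j) = (\<Sum>i<N. \<Sum>j<N. B t i j * ?g i)"
      by (subst sum.swap) (simp add: B_sym)
    then show ?thesis by (simp add: right_diff_distrib sum_subtractf)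
  qed
  have "(\<Sum>i<N. \<omega> i * (\<Sum>j<N. a t i j * ?g j))
      = L t + (\<Sum>i<N. \<Sum>j<N. \<rho> t i * B t i j * (?g j - ?g i))"
    unfolding L_def by (simp add: row sum.distrib)
  also have "(\<Sum>i<N. \<Sum>j<N. \<rho> t i * B t i j * (?g j - ?g i))
      = (\<Sum>i<N. \<Sum>j<N. (\<rho> t i - 1) * B t i j * (?g j - ?g i)) + (\<Sum>i<N. \<Sum>j<N. B t i j * (?g j - ?g i))"
    by (simp add: sum.distrib[symmetric] algebra_simps)
  finally show ?thesis using antisym by simp
qed

lemma norm_sq_diff_le: "i < N \<Longrightarrow> j < N \<Longrightarrow> \<bar>(norm (X t j))\<^sup>2 - (norm (X t i))\<^sup>2\<bar> \<le> 2 * R * d t i j"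
proof -
  assume i: "i < N" and j: "j < N"
  have "(norm (X t j))\<^sup>2 - (norm (X t i))\<^sup>2
      = (norm (X t j) - norm (X t i)) * (norm (X t j) + norm (X t i))"
    by (simp add: power2_eq_square algebra_simps)
  also have "\<bar>\<dots>\<bar> \<le> d t i j * (2 * R)"
    unfolding abs_mult
  proof (rule mult_mono)
    show "\<bar>norm (X t j) - norm (X t i)\<bar> \<le> d t i j"
      using norm_triangle_ineq3[of "X t j" "X t i"] by (simp add: d_def norm_minus_commute)
    show "\<bar>norm (X t j) + norm (X t i)\<bar> \<le> 2 * R"
      using X_bounded[OF i, of t] X_bounded[OF j, of t] by simp
  qed (auto simp: d_nonneg)
  finally show ?thesis by (simp add: mult_ac)
qed

lemma freezing_error_le:
  "(\<Sum>i<N. \<Sum>j<N. (\<rho> t i - 1) * B t i j * ((norm (X t j))\<^sup>2 - (norm (X t i))\<^sup>2))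
   \<le> \<theta> t * (2 * R) * (\<Sum>i<N. \<Sum>j<N. B t i j * d t i j)"
proof -
  have "(\<rho> t i - 1) * B t i j * ((norm (X t j))\<^sup>2 - (norm (X t i))\<^sup>2)
      \<le> \<theta> t * (2 * R) * (B t i j * d t i j)" if i: "i < N" and j: "j < N" for i j
  proof -
    have B0: "0 \<le> B t i j" using B_nonneg i j by auto
    have "(\<rho> t i - 1) * B t i j * ((norm (X t j))\<^sup>2 - (norm (X t i))\<^sup>2)
        \<le> \<bar>\<rho> t i - 1\<bar> * B t i j * \<bar>(norm (X t j))\<^sup>2 - (norm (X t i))\<^sup>2\<bar>"
      using B0 by (metis abs_ge_self abs_mult abs_of_nonneg)
    also have "\<dots> \<le> \<theta> t * B t i j * (2 * R * d t i j)"
      using \<theta>_ge[OF i, of t] norm_sq_diff_le[OF i j, of t] B0 \<theta>_nonneg[of t]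
      by (intro mult_mono mult_right_mono) auto
    finally show ?thesis by (simp add: mult_ac)
  qed
  then have "(\<Sum>i<N. \<Sum>j<N. (\<rho> t i - 1) * B t i j * ((norm (X t j))\<^sup>2 - (norm (X t i))\<^sup>2))
      \<le> (\<Sum>i<N. \<Sum>j<N. \<theta> t * (2 * R) * (B t i j * d t i j))"
    by (intro sum_mono) auto
  then show ?thesis by (simp add: sum_distrib_left)
qed

lemma B_weighted_dist_le:
  "(\<Sum>i<N. \<Sum>j<N. B t i j * d t i j) \<le> W * W * (real N * real N * diam t + 2 * R * far t)"
proof -
  have "B t i j * d t i j \<le> W * W * (diam t + 2 * R * (if close i j then 0 else F t i j))"
    if i: "i < N" and j: "j < N" for i j
  proof -
    have "w i * w j \<le> W * W" using w_le_W[OF i] w_le_W[OF j] w_nonneg[OF j] by (intro mult_mono) auto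
    then have B: "B t i j \<le> W * W * F t i j"
      unfolding B_def using F_range by (intro mult_right_mono) auto
    have WW: "0 \<le> W * W" by simp
    show ?thesis
    proof (cases "close i j")
      case True
      have "B t i j \<le> W * W" using B F_range[of t i j] WW mult_left_le[of "F t i j" "W * W"] by linarith
      then have "B t i j * d t i j \<le> (W * W) * diam t"
        using d_le_diam[OF i j True] d_nonneg[of t i j] WW by (intro mult_mono) auto
      then show ?thesis using True by simp
    next
      case False
      have "B t i j * d t i j \<le> (W * W * F t i j) * (2 * R)"
        using B d_le_2R[OF i j] d_nonneg[of t i j] F_range[of t i j] WW by (intro mult_mono) auto
      moreover have "0 \<le> W * W * diam t" using diam_nonneg[of t] WW by simp
      ultimately show ?thesis using False by (simp add: algebra_simps)
    qed
  qed
  then have "(\<Sum>i<N. \<Sum>j<N. B t i j * d t i j)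
      \<le> (\<Sum>i<N. \<Sum>j<N. W * W * (diam t + 2 * R * (if close i j then 0 else F t i j)))"
    by (intro sum_mono) auto
  also have "\<dots> = W * W * (real N * real N * diam t + 2 * R * far t)"
    unfolding far_def by (simp add: sum.distrib sum_distrib_left algebra_simps)
  finally show ?thesis .
qed

text \<open>In a good step, each cross-cluster interaction produces a definite decrease of \<open>L\<close>:
  the two points are more than \<open>r\<close> apart and both coefficients involved are bounded below.\<close>
definition "\<mu> = wmin\<^sup>2 * (wmin / W) * (wmin / W) * r\<^sup>2"

lemma \<mu>_pos: "\<mu> > 0" unfolding \<mu>_def using wmin_pos W_pos r_pos by simp

lemma cross_interaction_gain:
  assumes g: "good t" and i: "i < N" and l: "l < N" and far: "\<not> close i l"
  shows "\<mu> * F t i l \<le> \<omega> i * a t i i * (a t i l * (d t i l)\<^sup>2)"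
proof -
  have q: "0 \<le> wmin / W" using wmin_pos W_pos by simp
  have "r\<^sup>2 \<le> (d t i l)\<^sup>2" using good_far[OF g i l far] r_pos by (intro power_mono) auto
  then have pair: "F t i l * (wmin / W) * r\<^sup>2 \<le> a t i l * (d t i l)\<^sup>2"
    using a_ge[OF i l, of t] q F_range[of t i l] a_nonneg[OF l, of t i] by (intro mult_mono) auto
  have self: "wmin\<^sup>2 * (wmin / W) \<le> \<omega> i * a t i i"
    using \<omega>_ge[OF i] a_ge[OF i i, of t] q \<omega>_nonneg[OF i] by (intro mult_mono) (auto simp: F_diag)
  have "wmin\<^sup>2 * (wmin / W) * (F t i l * (wmin / W) * r\<^sup>2)
      \<le> \<omega> i * a t i i * (a t i l * (d t i l)\<^sup>2)"
    by (rule mult_mono[OF self pair])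
       (use F_range[of t i l] \<omega>_nonneg[OF i] a_nonneg[OF i, of t i] wmin_pos W_pos in simp_all)
  then show ?thesis by (simp add: \<mu>_def mult_ac)
qed

lemma far_le_gain: assumes g: "good t"
  shows "\<mu> * far t \<le> (\<Sum>i<N. \<omega> i * (a t i i * (\<Sum>l<N. a t i l * (d t i l)\<^sup>2)))"
proof -
  have "\<mu> * (if close i l then 0 else F t i l) \<le> \<omega> i * a t i i * (a t i l * (d t i l)\<^sup>2)"
    if i: "i < N" and l: "l < N" for i l
    using cross_interaction_gain[OF g i l] \<omega>_nonneg[OF i] a_nonneg[OF i, of t i] a_nonneg[OF l, of t i]
    by (cases "close i l") auto
  then have "(\<Sum>i<N. \<Sum>l<N. \<mu> * (if close i l then 0 else F t i l))
      \<le> (\<Sum>i<N. \<Sum>l<N. \<omega> i * a t i i * (a t i l * (d t i l)\<^sup>2))"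
    by (intro sum_mono) auto
  then show ?thesis by (simp add: far_def sum_distrib_left mult_ac)
qed

lemma moment_step: assumes g: "good t"
  shows "L (Suc t) \<le> L t - \<mu> * far t
           + \<theta> t * (2 * R) * (W * W * (real N * real N * diam t + 2 * R * far t))"
proof -
  have "L (Suc t) \<le> (\<Sum>i<N. \<omega> i * ((\<Sum>j<N. a t i j * (norm (X t j))\<^sup>2)
                                    - a t i i * (\<Sum>l<N. a t i l * (d t i l)\<^sup>2)))"
    unfolding L_def by (intro sum_mono mult_left_mono norm_sq_step \<omega>_nonneg) auto
  also have "\<dots> = (\<Sum>i<N. \<omega> i * (\<Sum>j<N. a t i j * (norm (X t j))\<^sup>2))
                 - (\<Sum>i<N. \<omega> i * (a t i i * (\<Sum>l<N. a t i l * (d t i l)\<^sup>2)))"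
    by (simp add: right_diff_distrib sum_subtractf)
  also have "\<dots> \<le> L t + \<theta> t * (2 * R) * (\<Sum>i<N. \<Sum>j<N. B t i j * d t i j) - \<mu> * far t"
    using frozen_average_eq[of t] freezing_error_le[of t] far_le_gain[OF g] by linarith
  also have "\<dots> \<le> L t + \<theta> t * (2 * R) * (W * W * (real N * real N * diam t + 2 * R * far t)) - \<mu> * far t"
    using B_weighted_dist_le[of t] \<theta>_nonneg[of t] R_nonneg by (simp add: mult_left_mono)
  finally show ?thesis by simp
qed


text \<open>Eventually all steps are good and \<open>\<theta>\<close> is below a threshold \<open>\<theta>\<^sub>0\<close> making the freezing
  error harmless; from then on the diameter and moment recursions are coupled as in
  \<open>coupled_recursions_summable\<close>, so cluster diameters and cross interactions are summable.\<close>
lemma diam_far_summable: "summable diam \<and> summable far"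
proof -
  define K1 where "K1 = 2 * R * (W * W)"
  define K where "K = 4 * R * (W / wmin)"
  define C where "C = K1 * (real N * real N * K / \<gamma> + 2 * R)"
  define \<theta>0 where "\<theta>0 = \<mu> / (2 * (C + 1))"
  have K1: "0 \<le> K1" and K: "0 \<le> K" unfolding K1_def K_def using R_nonneg wmin_pos W_pos by auto
  have C_nonneg: "0 \<le> C" unfolding C_def using K1 K R_nonneg \<gamma>_pos by auto
  have \<theta>0_pos: "\<theta>0 > 0" unfolding \<theta>0_def using \<mu>_pos C_nonneg by simp
  have \<theta>0_small: "\<theta>0 * K1 * (real N * real N) * K / \<gamma> + \<theta>0 * K1 * (2 * R) \<le> \<mu> / 2"
  proof -
    have "\<theta>0 * C = \<mu> / 2 * (C / (C + 1))"
      unfolding \<theta>0_def using C_nonneg by (simp add: field_simps)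
    also have "\<dots> \<le> \<mu> / 2" using C_nonneg \<mu>_pos by (intro mult_left_le) auto
    finally show ?thesis by (simp add: C_def algebra_simps)
  qed
  have "\<forall>\<^sub>F t in sequentially. good t \<and> \<theta> t < \<theta>0"
    using eventually_good order_tendstoD(2)[OF \<theta>_tendsto_0 \<theta>0_pos] by (rule eventually_conj)
  then obtain T0 where T0: "\<And>t. t \<ge> T0 \<Longrightarrow> good t \<and> \<theta> t < \<theta>0"
    unfolding eventually_sequentially by blast
  have diam_step': "diam (Suc (n + T0)) \<le> (1 - \<gamma>) * diam (n + T0) + K * far (n + T0)" for n
    using diam_step[of "n + T0"] T0[of "n + T0"] by (simp add: K_def mult_ac)
  have moment_step': "L (Suc (n + T0)) \<le> L (n + T0) - \<mu> * far (n + T0)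
      + (\<theta>0 * K1 * (real N * real N)) * diam (n + T0) + (\<theta>0 * K1 * (2 * R)) * far (n + T0)" for n
  proof -
    have "\<theta> (n + T0) * (K1 * (real N * real N * diam (n + T0) + 2 * R * far (n + T0)))
        \<le> \<theta>0 * (K1 * (real N * real N * diam (n + T0) + 2 * R * far (n + T0)))"
      using T0[of "n + T0"] K1 diam_nonneg far_nonneg R_nonneg by (intro mult_right_mono) auto
    then show ?thesis
      using moment_step[of "n + T0"] T0[of "n + T0"] by (simp add: K1_def algebra_simps)
  qed
  note coupled = coupled_recursions_summable[where c="\<lambda>n. diam (n + T0)" and s="\<lambda>n. far (n + T0)"
      and L="\<lambda>n. L (n + T0)" and \<alpha>=\<mu> and A="\<theta>0 * K1 * (real N * real N)" and B="\<theta>0 * K1 * (2 * R)"]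
  have "summable (\<lambda>n. far (n + T0))" "summable (\<lambda>n. diam (n + T0))"
    by (rule coupled; use diam_nonneg far_nonneg L_nonneg \<gamma>_pos \<mu>_pos \<theta>0_pos K1 K diam_step'
        moment_step' \<theta>0_small in simp)+
  then show ?thesis by (simp add: summable_iff_shift)
qed

text \<open>Summable displacements give convergent iterates.\<close>
lemma iterates_convergent_nondegenerate: assumes i: "i < N" shows "convergent (\<lambda>t. X t i)"
proof -
  have "summable (\<lambda>t. norm (Z t i))"
  proof (rule summable_comparison_test_ev)
    show "\<forall>\<^sub>F t in sequentially. norm (norm (Z t i)) \<le> diam t + 2 * R * (W / wmin) * far t"
      using eventually_good by eventually_elim (use displacement_le i in auto)
    show "summable (\<lambda>t. diam t + 2 * R * (W / wmin) * far t)"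
      using diam_far_summable by (intro summable_add summable_mult) auto
  qed
  then have Z_summable: "summable (\<lambda>t. Z t i)" by (rule summable_norm_cancel)
  have telescope: "X t i = X 0 i - (\<Sum>k<t. Z k i)" for t
    by (induction t) (auto simp: Z_def)
  have "(\<lambda>t. X 0 i - (\<Sum>k<t. Z k i)) \<longlonglongrightarrow> X 0 i - (\<Sum>k. Z k i)"
    by (intro tendsto_intros summable_LIMSEQ Z_summable)
  then show ?thesis unfolding telescope[symmetric] convergent_def by blast
qed


end

context blurring_mean_shift begin

text \<open>Convergence in general: either the kernel vanishes off the origin and nothing moves,
  or, being radial and decreasing, it is bounded below by \<open>f u\<^sub>0 > 0\<close> on the ball of radius
  \<open>\<bar>u\<^sub>0\<bar> > 0\<close> and the nondegenerate case applies.\<close>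
lemma iterates_convergent: assumes i: "i < N" shows "convergent (\<lambda>t. X t i)"
proof (cases "\<forall>u. u \<noteq> 0 \<longrightarrow> f u = 0")
  case True
  then show ?thesis using iterates_stationary[OF _ i] by (simp add: convergent_const)
next
  case False
  then obtain u0 where u0: "u0 \<noteq> 0" "f u0 \<noteq> 0" by blast
  interpret blurring_mean_shift_nondegenerate f w N x \<phi> "norm u0" "f u0"
  proof unfold_locales
    show "0 < norm u0" using u0 by simp
    show "0 < f u0" using f_range[of u0] u0 by simp
    show "f u0 \<le> f u" if "norm u \<le> norm u0" for u
      using that by (simp add: f_radial \<phi>_decreasing)
  qed
  show ?thesis using iterates_convergent_nondegenerate[OF i] .
qed

end

theorem theorem1:
  fixes f :: "real^'p \<Rightarrow> real" and w :: "nat \<Rightarrow> real"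
    and x :: "nat \<Rightarrow> real^'p" and N :: nat
  assumes "N \<ge> 1"
    and "\<And>j. j < N \<Longrightarrow> w j > 0"
    and "PDD f"
  shows "\<exists>xs :: nat \<Rightarrow> real^'p. \<forall>i<N. (\<lambda>t. bms f w N x t i) \<longlonglongrightarrow> xs i"
proof -
  obtain \<phi> :: "real \<Rightarrow> real" where
    kernel: "\<And>u. 0 \<le> f u \<and> f u \<le> 1" "\<And>u. f u = 1 \<longleftrightarrow> u = 0" "\<And>u. f u = \<phi> (norm u)"
      "\<And>a b. 0 \<le> a \<Longrightarrow> a \<le> b \<Longrightarrow> \<phi> b \<le> \<phi> a"
    using assms(3) unfolding PDD_def by blast
  interpret blurring_mean_shift f w N x \<phi>
    by unfold_locales (use assms(1,2) kernel in auto)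
  have "(\<lambda>t. bms f w N x t i) \<longlonglongrightarrow> lim (\<lambda>t. X t i)" if "i < N" for i
    using iterates_convergent[OF that] by (simp add: X_def convergent_LIMSEQ_iff)
  then show ?thesis by (intro exI[of _ "\<lambda>i. lim (\<lambda>t. X t i)"]) blast
qed

end
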